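(* Define, for $x\in\mathcal N$, $$f(x)=\mathbb{E}_x[V(x-D+\xi)]-\mathbb{E}_x[V(x-D)] = \sum_{d=0}^x\tbinom{x}{d}\big(\tfrac qx\big)^d\big(1-\tfrac qx\big)^{x-d}\,p\,\big(V(x+1-d)-V(x-d)\big).$$ Then $f(x+1)-f(x)\ge0$ for all $x\in\mathcal N$, i.e. $f$ is nondecreasing.
   Context: Single-server problem: Bernoulli($p$) arrivals $\xi$, departures $D\sim\mathrm{Binomial}(x,q/x)$ given state $x\ge1$ (no departures at $x=0$), queue $X_{t+1}=X_t-D_{t+1}+\nu_t\xi_{t+1}$, $\nu\in\{0,1\}$; $C>0$, $1>q>2p>0$, $\lambda\in\mathbb R$, cost $c(x,\nu)=Cx+(1-\nu)\lambda$. $V$ is the average-cost relative value function solving $V(x)=Cx-\beta+\min\big(\mathbb{E}_x[pV(x-D+1)+(1-p)V(x-D)],\ \lambda+\mathbb{E}_x[V(x-D)]\big)$, $V(0)=0$; $V$ is nondecreasing and has increasing differences ($V(x+z)-V(x)\ge V(y+z)-V(y)$ for $z>0$, $x>y$). *)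

theory Defs
  imports Complex_Main
begin

text \<open>Expectation E_x[g(x - D)] where D ~ Binomial(x, q/x) given state x.
  For x = 0 this is g 0 (no departures), since q/0 = 0 and 0^0 = 1.\<close>
definition Ex_dep :: "real \<Rightarrow> nat \<Rightarrow> (nat \<Rightarrow> real) \<Rightarrow> real" where
  "Ex_dep q x g = (\<Sum>d = 0..x. real (x choose d) * (q / real x) ^ d
                       * (1 - q / real x) ^ (x - d) * g (x - d))"

definition bellman :: "real \<Rightarrow> real \<Rightarrow> real \<Rightarrow> real \<Rightarrow> real \<Rightarrow> (nat \<Rightarrow> real) \<Rightarrow> bool" where
  "bellman p q C lam beta V \<longleftrightarrow>
     (\<forall>x. V x = C * real x - beta +
        min (Ex_dep q x (\<lambda>y. p * V (y + 1) + (1 - p) * V y))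
            (lam + Ex_dep q x V))"

text \<open>f(x) = E_x[V(x - D + xi)] - E_x[V(x - D)], xi ~ Bernoulli(p) independent of D.\<close>
definition f_diff :: "real \<Rightarrow> real \<Rightarrow> (nat \<Rightarrow> real) \<Rightarrow> nat \<Rightarrow> real" where
  "f_diff p q V x = Ex_dep q x (\<lambda>y. p * V (y + 1) + (1 - p) * V y) - Ex_dep q x V"

end

theory Submission
  imports Defs
begin

text \<open>
  Write \<open>g y = p (V (y + 1) - V y)\<close>. Then \<open>f x = E[g (x - D)]\<close>, and \<open>g\<close> is nondecreasing
  because \<open>V\<close> has increasing differences. The number of survivors \<open>x - D\<close> is binomial with
  \<open>x\<close> trials and survival probability \<open>1 - q/x\<close>; passing from \<open>x\<close> to \<open>x + 1\<close> adds a trial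
  and raises the survival probability, so the survivor count grows stochastically and
  the expectation of the nondecreasing \<open>g\<close> grows.
\<close>

definition survivor_mean :: "nat \<Rightarrow> real \<Rightarrow> (nat \<Rightarrow> real) \<Rightarrow> real" where
  "survivor_mean n r g = (\<Sum>d\<le>n. real (n choose d) * r ^ d * (1 - r) ^ (n - d) * g (n - d))"

lemma survivor_mean_0 [simp]: "survivor_mean 0 r g = g 0"
  by (simp add: survivor_mean_def)

text \<open>Condition on whether the last of the \<open>n + 1\<close> individuals departs.\<close>
lemma survivor_mean_Suc:
  "survivor_mean (Suc n) r g = (1 - r) * survivor_mean n r (\<lambda>y. g (Suc y)) + r * survivor_mean n r g"
proof -
  define w where "w m d = real (m choose d) * r ^ d * (1 - r) ^ (m - d) * g (m - d)" for m d
  define S where "S = (\<Sum>d\<le>n. real (n choose Suc d) * r ^ Suc d * (1 - r) ^ (n - d) * g (n - d))"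
  have w_Suc: "w (Suc n) (Suc d) = r * w n d + real (n choose Suc d) * r ^ Suc d * (1 - r) ^ (n - d) * g (n - d)" for d
    unfolding w_def by (simp add: algebra_simps)
  have "survivor_mean (Suc n) r g = w (Suc n) 0 + (\<Sum>d\<le>n. w (Suc n) (Suc d))"
    unfolding survivor_mean_def w_def by (rule sum.atMost_Suc_shift)
  also have "(\<Sum>d\<le>n. w (Suc n) (Suc d)) = (\<Sum>d\<le>n. r * w n d) + S"
    unfolding w_Suc sum.distrib S_def ..
  also have "(\<Sum>d\<le>n. r * w n d) = r * survivor_mean n r g"
    unfolding survivor_mean_def w_def by (simp add: sum_distrib_left)
  finally have lhs: "survivor_mean (Suc n) r g = w (Suc n) 0 + r * survivor_mean n r g + S"
    by simp
  have "(1 - r) * survivor_mean n r (\<lambda>y. g (Suc y))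
      = (\<Sum>d\<le>n. real (n choose d) * r ^ d * (1 - r) ^ (Suc n - d) * g (Suc n - d))"
    unfolding survivor_mean_def sum_distrib_left
    by (rule sum.cong) (auto simp: Suc_diff_le)
  also have "\<dots> = (\<Sum>d\<le>Suc n. real (n choose d) * r ^ d * (1 - r) ^ (Suc n - d) * g (Suc n - d))"
    by simp
  also have "\<dots> = w (Suc n) 0 + S"
    unfolding S_def w_def by (subst sum.atMost_Suc_shift) simp
  finally show ?thesis
    using lhs by linarith
qed

lemma survivor_mean_mono:
  assumes "0 \<le> r" "r \<le> 1" "\<And>y. g y \<le> h y"
  shows "survivor_mean n r g \<le> survivor_mean n r h"
  unfolding survivor_mean_def
  using assms by (intro sum_mono mult_left_mono) auto

lemma survivor_mean_le_Suc:
  assumes "mono g" "0 \<le> r" "r \<le> 1"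
  shows "survivor_mean n r g \<le> survivor_mean (Suc n) r g"
proof -
  have "survivor_mean n r g \<le> survivor_mean n r (\<lambda>y. g (Suc y))"
    using assms by (intro survivor_mean_mono) (auto simp: mono_def)
  then have "(1 - r) * survivor_mean n r g \<le> (1 - r) * survivor_mean n r (\<lambda>y. g (Suc y))"
    using assms by (simp add: mult_left_mono)
  then show ?thesis
    by (simp add: survivor_mean_Suc algebra_simps)
qed

lemma survivor_mean_antimono_rate:
  assumes "mono g" "0 \<le> r'" "r' \<le> r" "r \<le> 1"
  shows "survivor_mean n r g \<le> survivor_mean n r' g"
  using assms(1)
proof (induction n arbitrary: g)
  case 0
  then show ?case by simp
next
  case (Suc n)
  have mono_shift: "mono (\<lambda>y. g (Suc y))"
    using Suc.prems by (auto simp: mono_def)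
  define A where "A = survivor_mean n r (\<lambda>y. g (Suc y))"
  define A' where "A' = survivor_mean n r' (\<lambda>y. g (Suc y))"
  define B where "B = survivor_mean n r g"
  define B' where "B' = survivor_mean n r' g"
  have "A \<le> A'" "B \<le> B'"
    unfolding A_def A'_def B_def B'_def using Suc.IH mono_shift Suc.prems by blast+
  have "B \<le> A"
    unfolding A_def B_def using Suc.prems assms by (intro survivor_mean_mono) (auto simp: mono_def)
  then have "(r - r') * (B - A) \<le> 0"
    using assms by (simp add: mult_nonneg_nonpos)
  then have "(1 - r) * A + r * B \<le> (1 - r') * A + r' * B"
    by (simp add: algebra_simps)
  also have "\<dots> \<le> (1 - r') * A' + r' * B'"
    using \<open>A \<le> A'\<close> \<open>B \<le> B'\<close> assms by (intro add_mono mult_left_mono) auto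
  finally show ?case
    unfolding A_def A'_def B_def B'_def by (simp add: survivor_mean_Suc)
qed

lemma survivor_mean_rate_mono_state:
  assumes "mono g" "0 \<le> q" "q \<le> 1"
  shows "survivor_mean x (q / real x) g \<le> survivor_mean (Suc x) (q / real (Suc x)) g"
proof (cases "x = 0")
  case True
  then show ?thesis
    using survivor_mean_le_Suc[OF assms, of 0] by simp
next
  case False
  have rates: "0 \<le> q / real (Suc x)" "q / real (Suc x) \<le> q / real x" "q / real x \<le> 1"
    using False assms by (auto simp: frac_le)
  have "survivor_mean x (q / real x) g \<le> survivor_mean x (q / real (Suc x)) g"
    using survivor_mean_antimono_rate[OF assms(1) rates] .
  also have "\<dots> \<le> survivor_mean (Suc x) (q / real (Suc x)) g"
    using rates by (intro survivor_mean_le_Suc[OF assms(1)]) linarith+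
  finally show ?thesis .
qed

lemma f_diff_eq_survivor_mean:
  "f_diff p q V x = survivor_mean x (q / real x) (\<lambda>y. p * (V (Suc y) - V y))"
  unfolding f_diff_def Ex_dep_def survivor_mean_def atLeast0AtMost sum_subtractf[symmetric]
  by (rule sum.cong) (simp_all add: algebra_simps)

lemma mono_increment_if_increasing_differences:
  fixes V :: "nat \<Rightarrow> real"
  assumes "\<And>x y z. 0 < z \<Longrightarrow> y < x \<Longrightarrow> V (x + z) - V x \<ge> V (y + z) - V y"
  shows "mono (\<lambda>y. V (Suc y) - V y)"
proof (rule monoI)
  fix a b :: nat
  assume "a \<le> b"
  then show "V (Suc a) - V a \<le> V (Suc b) - V b"
    using assms[of 1 a b] by (cases "a = b") auto
qed

theorem mainTheorem7:
  fixes p q C lam beta :: real and V :: "nat \<Rightarrow> real"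
  assumes "C > 0" and "0 < 2 * p" and "2 * p < q" and "q < 1"
    and "bellman p q C lam beta V"
    and "V 0 = 0"
    and "mono V"
    and "\<And>x y z. 0 < z \<Longrightarrow> y < x \<Longrightarrow> V (x + z) - V x \<ge> V (y + z) - V y"
  shows "\<forall>x. f_diff p q V (x + 1) - f_diff p q V x \<ge> 0"
proof
  fix x :: nat
  have "mono (\<lambda>y. p * (V (Suc y) - V y))"
    using mono_increment_if_increasing_differences[OF assms(8)] assms(2)
    by (auto simp: mono_def mult_left_mono)
  then have "f_diff p q V x \<le> f_diff p q V (Suc x)"
    unfolding f_diff_eq_survivor_mean
    by (rule survivor_mean_rate_mono_state) (use assms(2-4) in auto)
  then show "f_diff p q V (x + 1) - f_diff p q V x \<ge> 0"
    by simp
qed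

end
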